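(* Let $f:\mathbb{E}\to\mathbb{R}$ be continuous on some neighborhood of $\bar x\in\mathbb{E}$ and $\ell$-stable at $\bar x$, and suppose $f$ is strongly pseudoconvex at the point $\bar x$. Then $\bar x$ is an isolated local minimizer of second order of $f$ if and only if $\nabla f(\bar x)=0$ (the Fréchet derivative of $f$ at $\bar x$ exists under these hypotheses).
   Context: $\mathbb{E}$ is a real finite-dimensional Euclidean space with norm $\|\cdot\|$. Lower Dini directional derivative: $f'_D(y;u)=\liminf_{t\downarrow 0}t^{-1}[f(y+tu)-f(y)]$. $f$ is $\ell$-stable at $x$ iff there exist a neighborhood $U$ of $x$ and $K>0$ with $|f'_D(y;u)-f'_D(x;u)|\le K\|y-x\|\,\|u\|$ for all $y\in U$, $u\in\mathbb{E}$. $f$ is strongly pseudoconvex at $x$ iff for every $u\in\mathbb{E}$ with $\|u\|=1$ and $f'_D(x;u)=0$ there exist $\delta>0$, $\alpha>0$ with $f(x+tu)\ge f(x)+\alpha t^2$ for all $t\in(0,\delta)$. A point $\bar x$ is an isolated local minimizer of second order iff there exist a neighborhood $N$ of $\bar x$ and $C>0$ with $f(x)>f(\bar x)+C\|x-\bar x\|^2$ for all $x\in N\setminus\{\bar x\}$. *)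

theory Defs
  imports "HOL-Analysis.Analysis"
begin

definition dini_lower :: "('a::real_normed_vector \<Rightarrow> real) \<Rightarrow> 'a \<Rightarrow> 'a \<Rightarrow> ereal" where
  "dini_lower f y u = Liminf (at_right (0::real)) (\<lambda>t. ereal ((f (y + t *\<^sub>R u) - f y) / t))"

definition l_stable :: "('a::real_normed_vector \<Rightarrow> real) \<Rightarrow> 'a \<Rightarrow> bool" where
  "l_stable f x \<longleftrightarrow> (\<exists>U K. open U \<and> x \<in> U \<and> K > 0 \<and>
     (\<forall>y\<in>U. \<forall>u. \<bar>dini_lower f y u\<bar> \<noteq> \<infinity> \<and> \<bar>dini_lower f x u\<bar> \<noteq> \<infinity> \<and>
        \<bar>real_of_ereal (dini_lower f y u) - real_of_ereal (dini_lower f x u)\<bar>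
          \<le> K * norm (y - x) * norm u))"

definition strongly_pseudoconvex_at :: "('a::real_normed_vector \<Rightarrow> real) \<Rightarrow> 'a \<Rightarrow> bool" where
  "strongly_pseudoconvex_at f x \<longleftrightarrow> (\<forall>u. norm u = 1 \<and> dini_lower f x u = 0 \<longrightarrow>
     (\<exists>\<delta>>0. \<exists>\<alpha>>0. \<forall>t. 0 < t \<and> t < \<delta> \<longrightarrow> f (x + t *\<^sub>R u) \<ge> f x + \<alpha> * t\<^sup>2))"

definition isolated_local_min_2 :: "('a::real_normed_vector \<Rightarrow> real) \<Rightarrow> 'a \<Rightarrow> bool" where
  "isolated_local_min_2 f x \<longleftrightarrow> (\<exists>N C. open N \<and> x \<in> N \<and> C > 0 \<and>
     (\<forall>y\<in>N - {x}. f y > f x + C * (norm (y - x))\<^sup>2))"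

end

theory Submission
  imports Defs
begin

text \<open>\<open>\<ell>\<close>-stability lets one integrate the lower Dini derivative along segments (a Dini
  mean value inequality), which gives \<open>|f z - f y - f'\<^sub>D(x; z - y)| \<le> K \<rho> |z - y|\<close> for
  \<open>y, z\<close> in a small ball of radius \<open>\<rho>\<close> about \<open>x\<close>.
  At a local minimum \<open>f'\<^sub>D(x; \<cdot>) \<ge> 0\<close>, and the estimate squeezes
  \<open>0 \<le> f y - f x \<le> K |y - x|\<^sup>2\<close>, so the gradient vanishes.
  Conversely, a vanishing gradient makes \<open>f'\<^sub>D(x; \<cdot>) = 0\<close>, so \<open>f\<close> is Lipschitz with
  constant \<open>K \<rho>\<close> on the ball of radius \<open>\<rho>\<close>; hence the quadratic growth that strong
  pseudoconvexity provides along a unit direction persists for all nearby directions, and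
  compactness of the unit sphere makes it uniform.\<close>

lemma increment_ge_if_frequently_slope_gt:
  fixes g :: "real \<Rightarrow> real"
  assumes "a \<le> b" and cont: "continuous_on {a..b} g"
    and slope: "\<And>s. a \<le> s \<Longrightarrow> s < b \<Longrightarrow> \<exists>\<^sub>F t in at_right 0. m < (g (s + t) - g s) / t"
  shows "m * (b - a) \<le> g b - g a"
proof -
  define h where "h s = g s - m * s" for s
  define S where "S = {s \<in> {a..b}. h a \<le> h s}"
  have "continuous_on {a..b} h"
    unfolding h_def by (intro continuous_intros cont)
  then have "closed S"
    unfolding S_def by (rule continuous_on_closed_Collect_le[OF continuous_on_const]) simp
  moreover have S_bdd: "bdd_above S"
    unfolding S_def by (auto intro: bdd_aboveI[of _ b])
  moreover have "a \<in> S"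
    using \<open>a \<le> b\<close> by (simp add: S_def)
  ultimately have c: "Sup S \<in> S"
    using closed_contains_Sup by blast
  have "Sup S = b"
  proof (rule ccontr)
    assume "Sup S \<noteq> b"
    with c have c_b: "a \<le> Sup S" "Sup S < b"
      by (auto simp: S_def)
    have "\<forall>\<^sub>F t in at_right 0. 0 < t \<and> t < b - Sup S"
      unfolding eventually_at_right_field using c_b by (auto intro!: exI[of _ "b - Sup S"])
    then obtain t where t: "m < (g (Sup S + t) - g (Sup S)) / t" "0 < t" "t < b - Sup S"
      using frequently_ex[OF frequently_eventually_frequently[OF slope[OF c_b]]] by auto
    then have "h (Sup S) < h (Sup S + t)"
      by (simp add: h_def field_simps)
    with c t have "Sup S + t \<in> S"
      by (auto simp: S_def)
    with S_bdd have "Sup S + t \<le> Sup S"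
      by (rule cSup_upper[rotated])
    with t show False
      by simp
  qed
  with c show ?thesis
    by (simp add: S_def h_def algebra_simps)
qed

lemma dini_lower_real_unit:
  "dini_lower g s 1 = Liminf (at_right 0) (\<lambda>t. ereal ((g (s + t) - g s) / t))"
  by (simp add: dini_lower_def)

lemma increment_ge_if_dini_lower_ge:
  fixes g :: "real \<Rightarrow> real"
  assumes "a \<le> b" and cont: "continuous_on {a..b} g"
    and dini: "\<And>s. a \<le> s \<Longrightarrow> s < b \<Longrightarrow> ereal m \<le> dini_lower g s 1"
  shows "m * (b - a) \<le> g b - g a"
proof (cases "a = b")
  case False
  have "m' \<le> (g b - g a) / (b - a)" if "m' < m" for m'
  proof -
    have "\<exists>\<^sub>F t in at_right 0. m' < (g (s + t) - g s) / t" if "a \<le> s" "s < b" for s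
    proof (rule eventually_frequently)
      have "ereal m' < dini_lower g s 1"
        using dini[OF that] \<open>m' < m\<close> less_le_trans[of "ereal m'" "ereal m"] by simp
      then show "\<forall>\<^sub>F t in at_right 0. m' < (g (s + t) - g s) / t"
        unfolding dini_lower_real_unit by (auto dest: less_LiminfD)
    qed simp
    then have "m' * (b - a) \<le> g b - g a"
      by (rule increment_ge_if_frequently_slope_gt[OF \<open>a \<le> b\<close> cont])
    with False \<open>a \<le> b\<close> show ?thesis
      by (simp add: field_simps)
  qed
  then have "m \<le> (g b - g a) / (b - a)"
    by (rule dense_le)
  with False \<open>a \<le> b\<close> show ?thesis
    by (simp add: field_simps)
qed simp

lemma increment_le_if_dini_lower_le:
  fixes g :: "real \<Rightarrow> real"
  assumes "a \<le> b" and cont: "continuous_on {a..b} g"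
    and dini: "\<And>s. a \<le> s \<Longrightarrow> s < b \<Longrightarrow> dini_lower g s 1 \<le> ereal M"
  shows "g b - g a \<le> M * (b - a)"
proof (cases "a = b")
  case False
  have "(g b - g a) / (b - a) \<le> M'" if "M < M'" for M'
  proof -
    have "\<exists>\<^sub>F t in at_right 0. - M' < (- g (s + t) - - g s) / t" if "a \<le> s" "s < b" for s
    proof (rule ccontr)
      assume "\<not> ?thesis"
      moreover have "(- g (s + t) - - g s) / t = - ((g (s + t) - g s) / t)" for t
        by argo
      ultimately have "\<forall>\<^sub>F t in at_right 0. ereal M' \<le> ereal ((g (s + t) - g s) / t)"
        unfolding not_frequently by (auto elim!: eventually_mono)
      then have "ereal M' \<le> dini_lower g s 1"
        unfolding dini_lower_real_unit by (rule Liminf_bounded)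
      then have "ereal M' \<le> ereal M"
        using dini[OF that] by (rule order_trans)
      with \<open>M < M'\<close> show False
        by simp
    qed
    then have "- M' * (b - a) \<le> - g b - - g a"
      by (rule increment_ge_if_frequently_slope_gt[OF \<open>a \<le> b\<close> continuous_on_minus[OF cont]])
    with False \<open>a \<le> b\<close> show ?thesis
      by (simp add: field_simps)
  qed
  then have "(g b - g a) / (b - a) \<le> M"
    by (rule dense_ge)
  with False \<open>a \<le> b\<close> show ?thesis
    by (simp add: field_simps)
qed simp

lemma dini_lower_along_line:
  "dini_lower (\<lambda>s. f (y + s *\<^sub>R v)) s 1 = dini_lower f (y + s *\<^sub>R v) v"
  unfolding dini_lower_def by (simp add: algebra_simps scaleR_add_left)

lemma dini_mean_value_segment:
  fixes f :: "'a::real_normed_vector \<Rightarrow> real"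
  assumes cont: "continuous_on (closed_segment y z) f"
    and dini: "\<And>w. w \<in> closed_segment y z \<Longrightarrow>
      ereal m \<le> dini_lower f w (z - y) \<and> dini_lower f w (z - y) \<le> ereal M"
  shows "m \<le> f z - f y \<and> f z - f y \<le> M"
proof -
  define g where "g s = f (y + s *\<^sub>R (z - y))" for s
  have on_segment: "y + s *\<^sub>R (z - y) \<in> closed_segment y z" if "0 \<le> s" "s \<le> 1" for s
    using that unfolding in_segment by (auto intro!: exI[of _ s] simp: algebra_simps)
  have g_cont: "continuous_on {0..1} g"
    unfolding g_def
    by (rule continuous_on_compose2[OF cont]) (auto intro!: continuous_intros on_segment)
  have g_dini: "ereal m \<le> dini_lower g s 1 \<and> dini_lower g s 1 \<le> ereal M"
    if "0 \<le> s" "s < 1" for s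
    unfolding g_def dini_lower_along_line using that by (intro dini on_segment) auto
  have "m * (1 - 0) \<le> g 1 - g 0"
    by (rule increment_ge_if_dini_lower_ge[OF _ g_cont]) (use g_dini in auto)
  moreover have "g 1 - g 0 \<le> M * (1 - 0)"
    by (rule increment_le_if_dini_lower_le[OF _ g_cont]) (use g_dini in auto)
  ultimately show ?thesis
    by (simp add: g_def)
qed

lemma l_stable_increment_estimate:
  fixes f :: "'a::real_normed_vector \<Rightarrow> real"
  assumes "l_stable f x" and "continuous_on V f" "open V" "x \<in> V"
  obtains r K where "r > 0" "K > 0" "\<And>u. \<bar>dini_lower f x u\<bar> \<noteq> \<infinity>"
    and "\<And>y z \<rho>. y \<in> cball x \<rho> \<Longrightarrow> z \<in> cball x \<rho> \<Longrightarrow> \<rho> < r \<Longrightarrow>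
      \<bar>f z - f y - real_of_ereal (dini_lower f x (z - y))\<bar> \<le> K * \<rho> * norm (z - y)"
proof -
  obtain U K where U: "open U" "x \<in> U" "K > 0" and stable: "\<forall>w\<in>U. \<forall>u.
      \<bar>dini_lower f w u\<bar> \<noteq> \<infinity> \<and> \<bar>dini_lower f x u\<bar> \<noteq> \<infinity> \<and>
      \<bar>real_of_ereal (dini_lower f w u) - real_of_ereal (dini_lower f x u)\<bar> \<le> K * norm (w - x) * norm u"
    using \<open>l_stable f x\<close> unfolding l_stable_def by blast
  obtain r where "r > 0" and r: "ball x r \<subseteq> U \<inter> V"
    using open_contains_ball_eq[OF open_Int[OF U(1) \<open>open V\<close>]] U(2) \<open>x \<in> V\<close> by blast
  have estimate: "\<bar>f z - f y - real_of_ereal (dini_lower f x (z - y))\<bar> \<le> K * \<rho> * norm (z - y)"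
    if yz: "y \<in> cball x \<rho>" "z \<in> cball x \<rho>" and "\<rho> < r" for y z \<rho>
  proof -
    define p where "p = real_of_ereal (dini_lower f x (z - y))"
    have segment: "closed_segment y z \<subseteq> ball x r"
      using closed_segment_subset[OF yz convex_cball] \<open>\<rho> < r\<close> by auto
    have "p - K * \<rho> * norm (z - y) \<le> f z - f y \<and> f z - f y \<le> p + K * \<rho> * norm (z - y)"
    proof (rule dini_mean_value_segment[where f = f])
      show "continuous_on (closed_segment y z) f"
        using continuous_on_subset[OF \<open>continuous_on V f\<close>] segment r by blast
    next
      fix w assume w: "w \<in> closed_segment y z"
      with segment r have "w \<in> U"
        by blast
      then have finite: "\<bar>dini_lower f w (z - y)\<bar> \<noteq> \<infinity>"
        and close: "\<bar>real_of_ereal (dini_lower f w (z - y)) - p\<bar> \<le> K * norm (w - x) * norm (z - y)"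
        using stable[rule_format, of w "z - y"] unfolding p_def by simp_all
      have "norm (w - x) \<le> \<rho>"
        using w closed_segment_subset[OF yz convex_cball] by (auto simp: dist_norm norm_minus_commute)
      then have "K * norm (w - x) * norm (z - y) \<le> K * \<rho> * norm (z - y)"
        using \<open>K > 0\<close> by (intro mult_right_mono mult_left_mono) simp_all
      with close have "\<bar>real_of_ereal (dini_lower f w (z - y)) - p\<bar> \<le> K * \<rho> * norm (z - y)"
        by linarith
      with finite show "ereal (p - K * \<rho> * norm (z - y)) \<le> dini_lower f w (z - y) \<and>
          dini_lower f w (z - y) \<le> ereal (p + K * \<rho> * norm (z - y))"
        by (cases "dini_lower f w (z - y)") auto
    qed
    then show ?thesis
      unfolding p_def by linarith
  qed
  show thesis
  proof (rule that[OF \<open>r > 0\<close> \<open>K > 0\<close> _ estimate])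
    show "\<bar>dini_lower f x u\<bar> \<noteq> \<infinity>" for u
      using stable[rule_format, OF U(2)] by simp
  qed
qed

lemma dini_lower_nonneg_at_local_min:
  fixes f :: "'a::real_normed_vector \<Rightarrow> real"
  assumes "\<forall>\<^sub>F y in nhds x. f x \<le> f y"
  shows "0 \<le> dini_lower f x u"
proof -
  have "((\<lambda>t. x + t *\<^sub>R u) \<longlongrightarrow> x) (at_right 0)"
    by (auto intro!: tendsto_eq_intros)
  with assms have "\<forall>\<^sub>F t in at_right 0. f x \<le> f (x + t *\<^sub>R u)"
    by (rule eventually_compose_filterlim)
  with eventually_at_right_less have "\<forall>\<^sub>F t in at_right 0. 0 \<le> ereal ((f (x + t *\<^sub>R u) - f x) / t)"
    by eventually_elim simp
  then show ?thesis
    unfolding dini_lower_def by (rule Liminf_bounded)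
qed

lemma has_derivative_imp_dini_lower:
  fixes f :: "'a::real_normed_vector \<Rightarrow> real"
  assumes "(f has_derivative f') (at x)"
  shows "dini_lower f x u = ereal (f' u)"
proof -
  have "((\<lambda>t. x + t *\<^sub>R u) has_derivative (\<lambda>t. t *\<^sub>R u)) (at 0)"
    by (auto intro!: derivative_eq_intros)
  from has_derivative_compose[OF this] assms
  have "((\<lambda>t. f (x + t *\<^sub>R u)) has_derivative (\<lambda>t. f' (t *\<^sub>R u))) (at 0)"
    by simp
  moreover have "(\<lambda>t. f' (t *\<^sub>R u)) = (*) (f' u)"
    using linear_scale[OF has_derivative_linear[OF assms]] by (auto simp: mult.commute)
  ultimately have "((\<lambda>t. f (x + t *\<^sub>R u)) has_real_derivative f' u) (at 0)"
    unfolding has_field_derivative_def by simp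
  then have "((\<lambda>t. (f (x + t *\<^sub>R u) - f x) / t) \<longlongrightarrow> f' u) (at_right 0)"
    unfolding has_field_derivative_iff by (auto intro: tendsto_mono[OF at_le[OF subset_UNIV]])
  then show ?thesis
    unfolding dini_lower_def by (intro lim_imp_Liminf tendsto_ereal) simp_all
qed

lemma has_derivative_zero_if_quadratic_bound:
  fixes f :: "'a::real_normed_vector \<Rightarrow> real"
  assumes "\<forall>\<^sub>F y in nhds x. \<bar>f y - f x\<bar> \<le> C * (norm (y - x))\<^sup>2"
  shows "(f has_derivative (\<lambda>h. 0)) (at x)"
  unfolding has_derivative_iff_norm
proof
  have "\<forall>\<^sub>F y in at x. norm (norm (f y - f x - 0) / norm (y - x)) \<le> C * norm (y - x)"
    unfolding eventually_at_filter
    by (rule eventually_mono[OF assms]) (simp add: divide_le_eq power2_eq_square mult.assoc)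
  moreover have "((\<lambda>y. C * norm (y - x)) \<longlongrightarrow> 0) (at x)"
    by (auto intro!: tendsto_eq_intros)
  ultimately show "((\<lambda>y. norm (f y - f x - 0) / norm (y - x)) \<longlongrightarrow> 0) (at x)"
    by (rule Lim_null_comparison)
qed simp

lemma uniform_quadratic_growth_on_sphere:
  fixes f :: "'a::euclidean_space \<Rightarrow> real"
  assumes "\<And>l. norm l = 1 \<Longrightarrow> \<exists>\<epsilon>>0. \<exists>\<alpha>>0. \<exists>\<delta>>0. \<forall>u t.
    norm u = 1 \<and> norm (u - l) < \<epsilon> \<and> 0 < t \<and> t < \<delta> \<longrightarrow> f x + \<alpha> * t\<^sup>2 \<le> f (x + t *\<^sub>R u)"
  shows "\<exists>\<alpha>>0. \<exists>\<delta>>0. \<forall>u t. norm u = 1 \<and> 0 < t \<and> t < \<delta> \<longrightarrow> f x + \<alpha> * t\<^sup>2 \<le> f (x + t *\<^sub>R u)"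
proof -
  obtain \<epsilon> \<alpha> \<delta> :: "'a \<Rightarrow> real" where pos: "\<And>l. norm l = 1 \<Longrightarrow> \<epsilon> l > 0 \<and> \<alpha> l > 0 \<and> \<delta> l > 0"
    and growth: "\<And>l u t. norm l = 1 \<Longrightarrow> norm u = 1 \<Longrightarrow> norm (u - l) < \<epsilon> l \<Longrightarrow> 0 < t \<Longrightarrow> t < \<delta> l \<Longrightarrow>
      f x + \<alpha> l * t\<^sup>2 \<le> f (x + t *\<^sub>R u)"
    using assms by metis
  obtain L where L: "L \<subseteq> sphere 0 1" "finite L" and cover: "sphere 0 1 \<subseteq> (\<Union>l\<in>L. ball l (\<epsilon> l))"
  proof (rule compactE_image[OF compact_sphere])
    show "sphere 0 1 \<subseteq> (\<Union>l\<in>sphere 0 1. ball l (\<epsilon> l))"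
      using pos by force
  qed auto
  \<comment> \<open>\<open>insert 1\<close> keeps both minima defined even if the subcover \<open>L\<close> is empty.\<close>
  define \<alpha>\<^sub>0 where "\<alpha>\<^sub>0 = Min (insert 1 (\<alpha> ` L))"
  define \<delta>\<^sub>0 where "\<delta>\<^sub>0 = Min (insert 1 (\<delta> ` L))"
  show ?thesis
  proof (rule exI[of _ \<alpha>\<^sub>0], intro conjI exI[of _ \<delta>\<^sub>0] allI impI)
    show "\<alpha>\<^sub>0 > 0" "\<delta>\<^sub>0 > 0"
      using L pos unfolding \<alpha>\<^sub>0_def \<delta>\<^sub>0_def by auto
  next
    fix u :: 'a and t :: real
    assume "norm u = 1 \<and> 0 < t \<and> t < \<delta>\<^sub>0"
    then have u: "norm u = 1" and t: "0 < t" "t < \<delta>\<^sub>0"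
      by simp_all
    then obtain l where l: "l \<in> L" "norm (u - l) < \<epsilon> l"
      using cover by (force simp: dist_norm norm_minus_commute)
    then have "\<alpha>\<^sub>0 \<le> \<alpha> l" "\<delta>\<^sub>0 \<le> \<delta> l"
      using L unfolding \<alpha>\<^sub>0_def \<delta>\<^sub>0_def by auto
    then have "\<alpha>\<^sub>0 * t\<^sup>2 \<le> \<alpha> l * t\<^sup>2"
      by (intro mult_right_mono) simp_all
    moreover have "f x + \<alpha> l * t\<^sup>2 \<le> f (x + t *\<^sub>R u)"
      using growth[of l u t] l L u t \<open>\<delta>\<^sub>0 \<le> \<delta> l\<close> by auto
    ultimately show "f x + \<alpha>\<^sub>0 * t\<^sup>2 \<le> f (x + t *\<^sub>R u)"
      by linarith
  qed
qed

lemma isolated_local_min_2_if_uniform_quadratic_growth: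
  fixes f :: "'a::real_normed_vector \<Rightarrow> real"
  assumes "\<alpha> > 0" "\<delta> > 0"
    and growth: "\<And>u t. norm u = 1 \<Longrightarrow> 0 < t \<Longrightarrow> t < \<delta> \<Longrightarrow> f x + \<alpha> * t\<^sup>2 \<le> f (x + t *\<^sub>R u)"
  shows "isolated_local_min_2 f x"
  unfolding isolated_local_min_2_def
proof (intro exI conjI ballI)
  fix y assume y: "y \<in> ball x \<delta> - {x}"
  define t where "t = norm (y - x)"
  have t: "0 < t" "t < \<delta>"
    using y by (auto simp: t_def dist_norm norm_minus_commute)
  have "f x + \<alpha> / 2 * t\<^sup>2 < f x + \<alpha> * t\<^sup>2"
    using t \<open>\<alpha> > 0\<close> by simp
  also have "\<dots> \<le> f (x + t *\<^sub>R ((1 / t) *\<^sub>R (y - x)))"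
    using growth[of "(1 / t) *\<^sub>R (y - x)" t] t by (simp add: t_def)
  finally show "f x + \<alpha> / 2 * (norm (y - x))\<^sup>2 < f y"
    using t by (simp add: t_def)
qed (use assms in auto)

lemma isolated_local_min_2_imp_local_min:
  assumes "isolated_local_min_2 f x"
  shows "\<forall>\<^sub>F y in nhds x. f x \<le> f y"
proof -
  obtain N C where N: "open N" "x \<in> N" "C > 0"
    and growth: "\<And>y. y \<in> N - {x} \<Longrightarrow> f y > f x + C * (norm (y - x))\<^sup>2"
    using assms unfolding isolated_local_min_2_def by blast
  have "f x \<le> f y" if "y \<in> N" for y
  proof (cases "y = x")
    case False
    with that have "f x + C * (norm (y - x))\<^sup>2 < f y"
      by (intro growth) blast
    moreover have "0 \<le> C * (norm (y - x))\<^sup>2"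
      using \<open>C > 0\<close> by simp
    ultimately show ?thesis
      by linarith
  qed simp
  with N show ?thesis
    unfolding eventually_nhds by blast
qed

lemma local_min_imp_has_derivative_zero:
  fixes f :: "'a::real_normed_vector \<Rightarrow> real"
  assumes "l_stable f x" "continuous_on V f" "open V" "x \<in> V"
    and local_min: "\<forall>\<^sub>F y in nhds x. f x \<le> f y"
  shows "(f has_derivative (\<lambda>h. 0)) (at x)"
proof -
  obtain r K where "r > 0" "K > 0" and finite: "\<And>u. \<bar>dini_lower f x u\<bar> \<noteq> \<infinity>"
    and estimate: "\<And>y z \<rho>. y \<in> cball x \<rho> \<Longrightarrow> z \<in> cball x \<rho> \<Longrightarrow> \<rho> < r \<Longrightarrow>
      \<bar>f z - f y - real_of_ereal (dini_lower f x (z - y))\<bar> \<le> K * \<rho> * norm (z - y)"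
    by (rule l_stable_increment_estimate[OF assms(1-4)]) blast
  have "\<forall>\<^sub>F y in nhds x. y \<in> ball x r"
    using \<open>r > 0\<close> by (intro eventually_nhds_in_open) auto
  with local_min have "\<forall>\<^sub>F y in nhds x. \<bar>f y - f x\<bar> \<le> K * (norm (y - x))\<^sup>2"
  proof eventually_elim
    fix y assume "f x \<le> f y" "y \<in> ball x r"
    moreover have "0 \<le> real_of_ereal (dini_lower f x (x - y))"
      using dini_lower_nonneg_at_local_min[OF local_min] finite by (simp add: real_of_ereal_pos)
    moreover have "\<bar>f x - f y - real_of_ereal (dini_lower f x (x - y))\<bar> \<le> K * norm (y - x) * norm (x - y)"
      using \<open>y \<in> ball x r\<close> by (intro estimate) (auto simp: dist_norm norm_minus_commute)
    ultimately show "\<bar>f y - f x\<bar> \<le> K * (norm (y - x))\<^sup>2"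
      by (simp add: power2_eq_square norm_minus_commute abs_le_iff)
  qed
  then show ?thesis
    by (rule has_derivative_zero_if_quadratic_bound)
qed

lemma has_derivative_zero_imp_isolated_local_min_2:
  fixes f :: "'a::euclidean_space \<Rightarrow> real"
  assumes "l_stable f x" "continuous_on V f" "open V" "x \<in> V"
    and "strongly_pseudoconvex_at f x" and "(f has_derivative (\<lambda>h. 0)) (at x)"
  shows "isolated_local_min_2 f x"
proof -
  obtain r K where "r > 0" "K > 0"
    and estimate: "\<And>y z \<rho>. y \<in> cball x \<rho> \<Longrightarrow> z \<in> cball x \<rho> \<Longrightarrow> \<rho> < r \<Longrightarrow>
      \<bar>f z - f y - real_of_ereal (dini_lower f x (z - y))\<bar> \<le> K * \<rho> * norm (z - y)"
    by (rule l_stable_increment_estimate[OF assms(1-4)]) blast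
  have dini_zero: "dini_lower f x u = 0" for u
    using has_derivative_imp_dini_lower[OF assms(6)] by (simp add: zero_ereal_def)
  have local_growth: "\<exists>\<epsilon>>0. \<exists>\<alpha>>0. \<exists>\<delta>>0. \<forall>u t. norm u = 1 \<and> norm (u - l) < \<epsilon> \<and> 0 < t \<and> t < \<delta> \<longrightarrow>
      f x + \<alpha> * t\<^sup>2 \<le> f (x + t *\<^sub>R u)" if l: "norm l = 1" for l
  proof -
    obtain \<delta> \<alpha> where "\<delta> > 0" "\<alpha> > 0"
      and growth: "\<forall>t. 0 < t \<and> t < \<delta> \<longrightarrow> f (x + t *\<^sub>R l) \<ge> f x + \<alpha> * t\<^sup>2"
      using \<open>strongly_pseudoconvex_at f x\<close> l dini_zero unfolding strongly_pseudoconvex_at_def by blast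
    have "f x + \<alpha> / 2 * t\<^sup>2 \<le> f (x + t *\<^sub>R u)"
      if u: "norm u = 1" "norm (u - l) < \<alpha> / (2 * K)" and t: "0 < t" "t < min \<delta> r" for u t
    proof -
      have "\<bar>f (x + t *\<^sub>R u) - f (x + t *\<^sub>R l)\<bar> \<le> K * t * norm (t *\<^sub>R u - t *\<^sub>R l)"
        using estimate[of "x + t *\<^sub>R l" t "x + t *\<^sub>R u"] u l t by (simp add: dini_zero dist_norm)
      also have "\<dots> = K * norm (u - l) * t\<^sup>2"
        using t by (simp add: scaleR_diff_right[symmetric] power2_eq_square)
      also have "\<dots> \<le> \<alpha> / 2 * t\<^sup>2"
        using u \<open>K > 0\<close> by (intro mult_right_mono) (simp_all add: field_simps)
      moreover have "f x + \<alpha> * t\<^sup>2 \<le> f (x + t *\<^sub>R l)"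
        using growth t by simp
      ultimately show ?thesis
        by linarith
    qed
    then show ?thesis
      using \<open>\<alpha> > 0\<close> \<open>\<delta> > 0\<close> \<open>K > 0\<close> \<open>r > 0\<close>
      by (intro exI[of _ "\<alpha> / (2 * K)"] exI[of _ "\<alpha> / 2"] exI[of _ "min \<delta> r"] conjI) auto
  qed
  then obtain \<alpha> \<delta> where "\<alpha> > 0" "\<delta> > 0"
    and "\<forall>u t. norm u = 1 \<and> 0 < t \<and> t < \<delta> \<longrightarrow> f x + \<alpha> * t\<^sup>2 \<le> f (x + t *\<^sub>R u)"
    using uniform_quadratic_growth_on_sphere by blast
  then show ?thesis
    by (intro isolated_local_min_2_if_uniform_quadratic_growth[where \<alpha> = \<alpha> and \<delta> = \<delta>]) auto
qed

theorem theorem3: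
  fixes f :: "'a::euclidean_space \<Rightarrow> real" and xbar :: 'a
  assumes "\<exists>V. open V \<and> xbar \<in> V \<and> continuous_on V f"
    and "l_stable f xbar"
    and "strongly_pseudoconvex_at f xbar"
  shows "isolated_local_min_2 f xbar \<longleftrightarrow> (f has_derivative (\<lambda>h. 0)) (at xbar)"
proof -
  obtain V where V: "open V" "xbar \<in> V" "continuous_on V f"
    using assms(1) by blast
  show ?thesis
  proof
    assume "isolated_local_min_2 f xbar"
    then show "(f has_derivative (\<lambda>h. 0)) (at xbar)"
      using local_min_imp_has_derivative_zero[OF assms(2) V(3,1,2)]
        isolated_local_min_2_imp_local_min by blast
  next
    assume "(f has_derivative (\<lambda>h. 0)) (at xbar)"
    then show "isolated_local_min_2 f xbar"
      by (rule has_derivative_zero_imp_isolated_local_min_2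
          [OF assms(2) V(3,1,2) assms(3)])
  qed
qed

end
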